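(* Let $p>q>1$ be relatively prime integers, let $\mathbf{x}$ be a sequence over a finite alphabet $B$, and let the tree $T(L_{\frac pq})$ be decorated by $\mathbf{x}$. If there exists some $h\ge0$ such that each factor in $F_h^\infty$ can be extended to at most one factor in $F^\infty_{h+1,w_{j,0}}$ for every $0\le j\le q-1$, then $\mathbf{x}$ is $\frac pq$-automatic.
   Context: $A_p=\{0,\ldots,p-1\}$; for $w=w_\ell\cdots w_0\in A_p^*$, $\mathrm{val}_{\frac pq}(w)=\sum_{i=0}^{\ell}\frac{w_i}{q}(\frac pq)^i$; $\mathrm{rep}_{\frac pq}(n)$ is the unique word not starting with $0$ of value $n$ ($\mathrm{rep}_{\frac pq}(0)=\varepsilon$); $L_{\frac pq}=\{\mathrm{rep}_{\frac pq}(n):n\ge0\}$. $\mathbf{x}$ is $\frac pq$-automatic if there is a deterministic finite automaton with output $(Q,q_0,A_p,\delta,\tau:Q\to B)$ with $x_n=\tau(\delta(q_0,\mathrm{rep}_{\frac pq}(n)))$ for all $n$. $T(L_{\frac pq})$ is the tree whose nodes are the words of $L_{\frac pq}$, with an edge labeled $d$ from $w$ to $wd$ whenever both are in $L_{\frac pq}$; node $w$ is decorated by $x_{\mathrm{val}_{\frac pq}(w)}$. For $w\in L_{\frac pq}$, the factor $T[w,h]$ has domain $w^{-1}L_{\frac pq}\cap A_p^{\le h}$ (where $w^{-1}L=\{u:wu\in L\}$), with node $u$ decorated by $x_{\mathrm{val}_{\frac pq}(wu)}$; two factors of the same height are equal if they have the same domain and same decorations. $F_h^\infty$ is the set of factors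 of height $h$ equal to $T[w,h]$ for infinitely many $w$; $F^\infty_{h,a}$ is the set of those in $F_h^\infty$ whose radix-least word of length $h$ in the domain ends with the letter $a$. A factor $U$ of height $h$ is extended to a factor $U'$ of height $h+1$ if the truncation of $U'$ to words of length at most $h$ equals $U$. For $0\le j\le q-1$, $w_j$ is the word listing in increasing order the letters $a\in A_p$ with $a\equiv -pj\pmod q$, and $w_{j,0}$ is its first letter. *)

theory Defs
  imports Complex_Main
begin

text \<open>Words over A_p are lists of naturals, most significant letter first:
  the list [w_l, ..., w_0].\<close>

definition alph :: "nat \<Rightarrow> nat set" where
  "alph p = {0..<p}"

definition val_pq :: "nat \<Rightarrow> nat \<Rightarrow> nat list \<Rightarrow> real" where
  "val_pq p q w = (\<Sum>i<length w. (real (w ! (length w - 1 - i)) / real q) * (real p / real q) ^ i)"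

definition rep_pq :: "nat \<Rightarrow> nat \<Rightarrow> nat \<Rightarrow> nat list" where
  "rep_pq p q n = (THE w. w \<in> lists (alph p) \<and> (w = [] \<or> hd w \<noteq> 0) \<and> val_pq p q w = real n)"

definition L_pq :: "nat \<Rightarrow> nat \<Rightarrow> nat list set" where
  "L_pq p q = range (rep_pq p q)"

definition pq_automatic :: "nat \<Rightarrow> nat \<Rightarrow> (nat \<Rightarrow> 'b) \<Rightarrow> bool" where
  "pq_automatic p q x \<longleftrightarrow>
    (\<exists>(Q::nat set) q0 \<delta> (\<tau>::nat \<Rightarrow> 'b).
       finite Q \<and> q0 \<in> Q \<and> (\<forall>s\<in>Q. \<forall>a<p. \<delta> s a \<in> Q) \<and>
       (\<forall>n. x n = \<tau> (foldl \<delta> q0 (rep_pq p q n))))"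

definition factor :: "nat \<Rightarrow> nat \<Rightarrow> (nat \<Rightarrow> 'b) \<Rightarrow> nat list \<Rightarrow> nat \<Rightarrow> nat list \<Rightarrow> 'b option" where
  "factor p q x w h = (\<lambda>u. if w @ u \<in> L_pq p q \<and> length u \<le> h
                           then Some (x (nat \<lfloor>val_pq p q (w @ u)\<rfloor>)) else None)"

definition F_inf :: "nat \<Rightarrow> nat \<Rightarrow> (nat \<Rightarrow> 'b) \<Rightarrow> nat \<Rightarrow> (nat list \<Rightarrow> 'b option) set" where
  "F_inf p q x h = {U. infinite {w \<in> L_pq p q. factor p q x w h = U}}"

definition radix_le :: "nat list \<Rightarrow> nat list \<Rightarrow> bool" where
  "radix_le u v \<longleftrightarrow> length u < length v \<or>
     (length u = length v \<and> (u = v \<or> (u, v) \<in> lexord {(a, b). a < b}))"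

definition F_inf_a :: "nat \<Rightarrow> nat \<Rightarrow> (nat \<Rightarrow> 'b) \<Rightarrow> nat \<Rightarrow> nat \<Rightarrow> (nat list \<Rightarrow> 'b option) set" where
  "F_inf_a p q x h a = {U \<in> F_inf p q x h.
     \<exists>u. U u \<noteq> None \<and> length u = h \<and>
         (\<forall>v. U v \<noteq> None \<and> length v = h \<longrightarrow> radix_le u v) \<and>
         u \<noteq> [] \<and> last u = a}"

definition extends :: "nat \<Rightarrow> (nat list \<Rightarrow> 'b option) \<Rightarrow> (nat list \<Rightarrow> 'b option) \<Rightarrow> bool" where
  "extends h U U' \<longleftrightarrow> (\<lambda>u. if length u \<le> h then U' u else None) = U"

definition wj0 :: "nat \<Rightarrow> nat \<Rightarrow> nat \<Rightarrow> nat" where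
  "wj0 p q j = (LEAST a. a < p \<and> (int a + int p * int j) mod int q = 0)"

end

theory Submission
  imports Defs "HOL-Number_Theory.Cong"
begin

text \<open>A word w a of L_{p/q} is a child of w exactly when q divides p val(w) + a. Hence the
  radix-least branch of length k below a nonempty word w is the greedy path of least admissible
  letters; it depends only on val(w) mod q^k and ends with some letter w_{j,0}. Two words with a
  common extension of length k have congruent values mod q^k, because p is invertible mod q.

  Only finitely many words carry a factor outside F^\<infinity>_h or F^\<infinity>_{h+1}, say none longer
  than M. Take as state of a word of length at most M + h + 1 the word itself, and of a longer
  word u v with |v| = h + 1 the pair (T[u, h+1], v). There are finitely many states, and the state
  determines the decoration. It is a right congruence: for w = u b z and a letter a, the new
  factor T[u b, h+1] has the truncation T[u b, h] read off T[u, h+1], its radix-least branch is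
  fixed by the common suffix z a, and so by hypothesis it is the unique extension of T[u b, h] in
  F^\<infinity>_{h+1, w_{j,0}}. The Myhill-Nerode construction then gives the automaton.\<close>

section \<open>Values of words in base p/q\<close>

lemma val_pq_Nil [simp]: "val_pq p q [] = 0"
  by (simp add: val_pq_def)

lemma val_pq_snoc: "val_pq p q (w @ [a]) = real a / real q + (real p / real q) * val_pq p q w"
proof -
  have "val_pq p q (w @ [a])
      = (\<Sum>i<Suc (length w). (real ((w @ [a]) ! (length w - i)) / real q) * (real p / real q) ^ i)"
    by (simp add: val_pq_def)
  also have "\<dots> = real a / real q +
      (\<Sum>i<length w. (real ((w @ [a]) ! (length w - Suc i)) / real q) * (real p / real q) ^ Suc i)"
    by (subst sum.lessThan_Suc_shift) simp
  also have "(\<Sum>i<length w. (real ((w @ [a]) ! (length w - Suc i)) / real q) * (real p / real q) ^ Suc i)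
      = (real p / real q) * val_pq p q w"
    unfolding val_pq_def sum_distrib_left by (rule sum.cong) (auto simp: nth_append)
  finally show ?thesis .
qed

lemma val_pq_nonneg: "0 \<le> val_pq p q w"
  by (induct w rule: rev_induct) (auto simp: val_pq_snoc)

lemma val_pq_pos:
  assumes "0 < p" "0 < q" "w \<noteq> []" "hd w \<noteq> 0"
  shows "0 < val_pq p q w"
  using assms(3,4)
proof (induct w rule: rev_induct)
  case (snoc a w)
  show ?case
  proof (cases "w = []")
    case True
    with snoc.prems assms(2) show ?thesis using val_pq_snoc[of p q "[]" a] by simp
  next
    case False
    with snoc have "0 < val_pq p q w" by simp
    with assms(1,2) show ?thesis by (simp add: val_pq_snoc add_nonneg_pos)
  qed
qed simp

lemma val_pq_times_power_q: "\<exists>k::nat. val_pq p q w * real q ^ length w = real k"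
proof (induct w rule: rev_induct)
  case (snoc a w)
  then obtain k where k: "val_pq p q w * real q ^ length w = real k" by blast
  show ?case
  proof (cases "q = 0")
    case False
    then have "val_pq p q (w @ [a]) * real q ^ length (w @ [a])
        = real a * real q ^ length w + real p * (val_pq p q w * real q ^ length w)"
      by (simp add: val_pq_snoc field_simps)
    also have "\<dots> = real (a * q ^ length w + p * k)" using k by simp
    finally show ?thesis by blast
  qed simp
qed simp

lemma Ints_if_coprime_multiples:
  fixes r :: real
  assumes "coprime p q" "real p * r = of_int i" "r * real q ^ m = of_int k"
  shows "r \<in> \<int>"
proof -
  have "coprime (int p) (int q ^ m)" using assms(1) by simp
  then obtain u v where uv: "u * int p + v * int q ^ m = 1"
    using bezout_int[of "int p" "int q ^ m"] by auto
  have "r = of_int u * (real p * r) + of_int v * (r * real q ^ m)"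
    using arg_cong[OF uv, of "\<lambda>t. r * of_int t"] by (simp add: algebra_simps)
  also have "\<dots> = of_int (u * i + v * k)" using assms by simp
  finally show ?thesis by (metis Ints_of_int)
qed

definition normal_word :: "nat \<Rightarrow> nat list \<Rightarrow> bool" where
  "normal_word p w \<longleftrightarrow> w \<in> lists (alph p) \<and> (w = [] \<or> hd w \<noteq> 0)"

lemma normal_word_snocD: "normal_word p (w @ [a]) \<Longrightarrow> normal_word p w \<and> a < p"
  by (cases w) (auto simp: normal_word_def alph_def)

definition nval :: "nat \<Rightarrow> nat \<Rightarrow> nat list \<Rightarrow> nat" where
  "nval p q w = nat \<lfloor>val_pq p q w\<rfloor>"

locale pq_numeration =
  fixes p q :: nat
  assumes one_less_q: "1 < q" and q_less_p: "q < p" and coprime_pq: "coprime p q"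
begin

lemma val_pq_snoc_eq_nat:
  assumes "val_pq p q (w @ [a]) = real n" "val_pq p q w = real m"
  shows "q * n = p * m + a"
proof -
  have "real (q * n) = real (p * m + a)"
    using assms one_less_q by (simp add: val_pq_snoc field_simps)
  then show ?thesis by linarith
qed

text \<open>val w has a power of q as denominator, while p val w = q n - a is an integer.\<close>
lemma val_pq_butlast_integral:
  assumes "val_pq p q (w @ [a]) = real n"
  shows "\<exists>m. val_pq p q w = real m"
proof -
  have "real p * val_pq p q w = of_int (int q * int n - int a)"
    using assms one_less_q by (simp add: val_pq_snoc field_simps)
  moreover obtain k where "val_pq p q w * real q ^ length w = of_int (int k)"
    using val_pq_times_power_q[of p q w] by (metis of_int_of_nat_eq)
  ultimately have "val_pq p q w \<in> \<int>"
    by (rule Ints_if_coprime_multiples[OF coprime_pq])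
  then obtain i where i: "val_pq p q w = of_int i" by (auto elim: Ints_cases)
  with val_pq_nonneg[of p q w] show ?thesis by (intro exI[of _ "nat i"]) simp
qed

lemma normal_word_val_inj:
  assumes "normal_word p w" "normal_word p w'" "val_pq p q w = real n" "val_pq p q w' = real n"
  shows "w = w'"
  using assms
proof (induct n arbitrary: w w' rule: less_induct)
  case (less n)
  have pos: "0 < val_pq p q u" if "normal_word p u" "u \<noteq> []" for u
    using val_pq_pos[of p q u] that one_less_q q_less_p by (simp add: normal_word_def)
  show ?case
  proof (cases "w = [] \<or> w' = []")
    case True
    with less.prems have "n = 0" by auto
    with less.prems pos have "w = []" "w' = []" by (metis of_nat_0 order_less_irrefl)+
    then show ?thesis by simp
  next
    case False
    then obtain v a v' a' where w: "w = v @ [a]" and w': "w' = v' @ [a']"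
      by (metis rev_exhaust)
    obtain m where m: "val_pq p q v = real m" using val_pq_butlast_integral less.prems w by blast
    obtain m' where m': "val_pq p q v' = real m'" using val_pq_butlast_integral less.prems w' by blast
    have v: "normal_word p v" "a < p" "normal_word p v'" "a' < p"
      using normal_word_snocD less.prems w w' by auto
    have qn: "q * n = p * m + a" "q * n = p * m' + a'"
      using val_pq_snoc_eq_nat[OF less.prems(3)[unfolded w] m]
        val_pq_snoc_eq_nat[OF less.prems(4)[unfolded w'] m'] by simp_all
    have "m = q * n div p" using qn(1) v(2) by simp
    moreover have "m' = q * n div p" using qn(2) v(4) by simp
    ultimately have "m = m'" by simp
    with qn have "a = a'" by simp
    have "0 < n" using pos less.prems w by fastforce
    with q_less_p have "q * n < p * n" by simp
    with qn have "m < n" by (metis add_lessD1 mult_less_cancel1)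
    from less.hyps[OF this v(1,3) m] m' \<open>m = m'\<close> \<open>a = a'\<close> w w' show ?thesis by simp
  qed
qed

lemma normal_word_val_surj: "\<exists>w. normal_word p w \<and> val_pq p q w = real n"
proof (induct n rule: less_induct)
  case (less n)
  show ?case
  proof (cases "n = 0")
    case True
    then show ?thesis by (intro exI[of _ "[]"]) (simp add: normal_word_def)
  next
    case False
    define m a where "m = q * n div p" and "a = q * n mod p"
    have qn: "q * n = p * m + a" by (simp add: m_def a_def)
    have "a < p" using q_less_p by (simp add: a_def)
    have "p * m < p * n" using qn q_less_p False by (metis add_lessD1 le_add1 mult_less_mono1 neq0_conv le_less_trans)
    then obtain u where u: "normal_word p u" "val_pq p q u = real m" using less by auto
    have "real q * val_pq p q (u @ [a]) = real (q * n)"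
      using u(2) one_less_q by (simp only: qn) (simp add: val_pq_snoc field_simps)
    then have "val_pq p q (u @ [a]) = real n" using one_less_q by simp
    moreover have "normal_word p (u @ [a])"
    proof (cases "u = []")
      case True
      with u have "a = q * n" using qn by simp
      with False one_less_q \<open>a < p\<close> True show ?thesis by (simp add: normal_word_def alph_def)
    qed (use u \<open>a < p\<close> in \<open>auto simp: normal_word_def alph_def\<close>)
    ultimately show ?thesis by blast
  qed
qed

lemma rep_pq: "normal_word p (rep_pq p q n) \<and> val_pq p q (rep_pq p q n) = real n"
proof -
  have "\<exists>!w. w \<in> lists (alph p) \<and> (w = [] \<or> hd w \<noteq> 0) \<and> val_pq p q w = real n"
    using normal_word_val_surj normal_word_val_inj unfolding normal_word_def by blast
  then have "rep_pq p q n \<in> lists (alph p) \<and> (rep_pq p q n = [] \<or> hd (rep_pq p q n) \<noteq> 0)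
      \<and> val_pq p q (rep_pq p q n) = real n"
    unfolding rep_pq_def by (rule theI')
  then show ?thesis by (simp add: normal_word_def)
qed

lemma mem_L_pq_iff: "w \<in> L_pq p q \<longleftrightarrow> normal_word p w \<and> (\<exists>n. val_pq p q w = real n)"
  using rep_pq normal_word_val_inj unfolding L_pq_def by blast

lemma rep_pq_mem_L_pq: "rep_pq p q n \<in> L_pq p q"
  by (simp add: L_pq_def)

lemma nval_rep_pq [simp]: "nval p q (rep_pq p q n) = n"
  using rep_pq by (simp add: nval_def)

lemma val_pq_eq_nval: "w \<in> L_pq p q \<Longrightarrow> val_pq p q w = real (nval p q w)"
  by (auto simp: mem_L_pq_iff nval_def)

lemma L_pq_subset_lists: "L_pq p q \<subseteq> lists (alph p)"
  by (auto simp: mem_L_pq_iff normal_word_def)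

lemma L_pq_snocD:
  assumes "w @ [a] \<in> L_pq p q"
  shows "w \<in> L_pq p q" and "a < p" and "q * nval p q (w @ [a]) = p * nval p q w + a"
proof -
  obtain n where n: "normal_word p (w @ [a])" "val_pq p q (w @ [a]) = real n"
    using assms by (auto simp: mem_L_pq_iff)
  obtain m where m: "val_pq p q w = real m" using val_pq_butlast_integral n(2) by blast
  show "w \<in> L_pq p q" "a < p" using normal_word_snocD[OF n(1)] m by (auto simp: mem_L_pq_iff)
  show "q * nval p q (w @ [a]) = p * nval p q w + a"
    using val_pq_snoc_eq_nat[OF n(2) m] n(2) m by (simp add: nval_def)
qed

lemma L_pq_appendD: "w @ z \<in> L_pq p q \<Longrightarrow> w \<in> L_pq p q"
  by (induct z rule: rev_induct) (auto dest: L_pq_snocD(1) simp flip: append_assoc)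

lemma L_pq_snocI:
  assumes "w \<in> L_pq p q" "w \<noteq> []" "a < p" "q dvd p * nval p q w + a"
  shows "w @ [a] \<in> L_pq p q"
proof -
  obtain k where k: "p * nval p q w + a = q * k" using assms(4) by blast
  have "real q * val_pq p q (w @ [a]) = real (p * nval p q w + a)"
    using one_less_q val_pq_eq_nval[OF assms(1)] by (simp add: val_pq_snoc field_simps)
  then have "val_pq p q (w @ [a]) = real k" using one_less_q by (simp add: k)
  moreover have "normal_word p (w @ [a])"
    using assms(1-3) by (cases w) (auto simp: mem_L_pq_iff normal_word_def alph_def)
  ultimately show ?thesis by (auto simp: mem_L_pq_iff)
qed

end

section \<open>Radix-least branches\<close>

text \<open>The least letter a with q dvd p n + a is w_{j,0} for j = n mod q, so least_ext p q n k
  is the greedy, radix-least branch of length k below any word of value n.\<close>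
fun least_ext :: "nat \<Rightarrow> nat \<Rightarrow> nat \<Rightarrow> nat \<Rightarrow> nat list" where
  "least_ext p q n 0 = []"
| "least_ext p q n (Suc k) = wj0 p q (n mod q) # least_ext p q ((p * n + wj0 p q (n mod q)) div q) k"

lemma length_least_ext [simp]: "length (least_ext p q n k) = k"
  by (induct k arbitrary: n) auto

lemma wj0_condition_iff_dvd:
  "(int a + int p * int (n mod q)) mod int q = 0 \<longleftrightarrow> q dvd p * n + a"
proof -
  have "(int a + int p * int (n mod q)) mod int q = int ((a + p * (n mod q)) mod q)"
    by (simp add: zmod_int)
  also have "(a + p * (n mod q)) mod q = (p * n + a) mod q"
    by (metis add.commute mod_add_right_eq mod_mult_right_eq)
  finally show ?thesis by (simp add: dvd_eq_mod_eq_0)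
qed

context pq_numeration
begin

lemma least_child_letter:
  shows "wj0 p q (n mod q) < p" and "q dvd p * n + wj0 p q (n mod q)"
    and "a < p \<Longrightarrow> q dvd p * n + a \<Longrightarrow> wj0 p q (n mod q) \<le> a"
proof -
  define r where "r = p * n mod q"
  define a0 where "a0 = (if r = 0 then 0 else q - r)"
  have "r < q" using one_less_q by (simp add: r_def)
  then have "a0 < q" using one_less_q by (simp add: a0_def)
  have "p * n = q * (p * n div q) + r" by (simp add: r_def)
  have "q dvd p * n + a0"
  proof (cases "r = 0")
    case False
    with \<open>r < q\<close> \<open>p * n = q * (p * n div q) + r\<close> have "p * n + a0 = q * (p * n div q + 1)"
      by (simp add: a0_def)
    then show ?thesis by simp
  qed (simp add: a0_def r_def dvd_eq_mod_eq_0)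
  with \<open>a0 < q\<close> q_less_p have "a0 < p \<and> (int a0 + int p * int (n mod q)) mod int q = 0"
    by (simp add: wj0_condition_iff_dvd)
  then have "wj0 p q (n mod q) < p \<and> (int (wj0 p q (n mod q)) + int p * int (n mod q)) mod int q = 0"
    unfolding wj0_def by (rule LeastI)
  then show "wj0 p q (n mod q) < p" "q dvd p * n + wj0 p q (n mod q)"
    by (simp_all add: wj0_condition_iff_dvd)
  show "wj0 p q (n mod q) \<le> a" if "a < p" "q dvd p * n + a"
    using that unfolding wj0_def by (intro Least_le) (simp add: wj0_condition_iff_dvd)
qed

lemma append_least_ext_mem_L_pq:
  "y \<in> L_pq p q \<Longrightarrow> y \<noteq> [] \<Longrightarrow> y @ least_ext p q (nval p q y) k \<in> L_pq p q"
proof (induct k arbitrary: y)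
  case (Suc k)
  let ?c = "wj0 p q (nval p q y mod q)"
  have yc: "y @ [?c] \<in> L_pq p q"
    using L_pq_snocI[OF Suc.prems] least_child_letter(1,2) by blast
  then have "nval p q (y @ [?c]) = (p * nval p q y + ?c) div q"
    using L_pq_snocD(3)[OF yc] one_less_q by (metis nonzero_mult_div_cancel_left not_one_less_zero)
  with Suc.hyps[OF yc] show ?case by simp
qed simp

lemma least_ext_lexord_le:
  assumes "y \<in> L_pq p q" "y \<noteq> []" "y @ z \<in> L_pq p q" "length z = k"
  shows "z = least_ext p q (nval p q y) k \<or> (least_ext p q (nval p q y) k, z) \<in> lexord {(a, b). a < b}"
  using assms
proof (induct k arbitrary: y z)
  case (Suc k)
  then obtain b z' where z: "z = b # z'" by (cases z) auto
  let ?c = "wj0 p q (nval p q y mod q)"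
  have yb: "y @ [b] \<in> L_pq p q" using L_pq_appendD[of "y @ [b]" z'] Suc.prems z by simp
  have nval_yb: "q * nval p q (y @ [b]) = p * nval p q y + b" by (rule L_pq_snocD(3)[OF yb])
  then have "?c \<le> b" using least_child_letter(3) L_pq_snocD(2)[OF yb] by (metis dvd_triv_left)
  show ?case
  proof (cases "?c = b")
    case True
    have "nval p q (y @ [b]) = (p * nval p q y + ?c) div q"
      using nval_yb True one_less_q by (metis nonzero_mult_div_cancel_left not_one_less_zero)
    then show ?thesis using Suc.hyps[OF yb] Suc.prems z True by auto
  qed (use \<open>?c \<le> b\<close> z in simp)
qed simp

lemma least_ext_cong:
  "n mod q ^ k = n' mod q ^ k \<Longrightarrow> least_ext p q n k = least_ext p q n' k"
proof (induct k arbitrary: n n')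
  case (Suc k)
  have "n mod q = n' mod q"
    using Suc.prems by (metis dvd_power mod_mod_cancel one_less_q zero_less_Suc gr_implies_not0 less_numeral_extra(4))
  define c where "c = wj0 p q (n mod q)"
  define A A' where "A = p * n + c" and "A' = p * n' + c"
  have "A mod (q * q ^ k) = A' mod (q * q ^ k)"
    using Suc.prems unfolding A_def A'_def power_Suc by (metis mod_add_cong mod_mult_cong)
  moreover have "A mod q = 0" "A' mod q = 0"
    using least_child_letter(2) \<open>n mod q = n' mod q\<close> unfolding A_def A'_def c_def dvd_eq_mod_eq_0
    by metis+
  ultimately have "q * (A div q mod q ^ k) = q * (A' div q mod q ^ k)"
    by (simp add: mod_mult2_eq)
  then have "least_ext p q (A div q) k = least_ext p q (A' div q) k"
    using one_less_q by (intro Suc.hyps) simp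
  then show ?case using \<open>n mod q = n' mod q\<close> by (simp add: A_def A'_def c_def)
qed simp

lemma last_least_ext: "\<exists>j<q. last (least_ext p q n (Suc k)) = wj0 p q j"
proof (induct k arbitrary: n)
  case 0
  have "n mod q < q" using one_less_q by simp
  then show ?case by auto
next
  case (Suc k)
  then show ?case by (metis last_ConsR least_ext.simps(2) length_0_conv length_least_ext nat.distinct(1))
qed

text \<open>Peel off the common letters using q val(y b) = p val(y) + b; p is invertible mod q.\<close>
lemma nval_mod_eq_if_common_extension:
  "y @ z \<in> L_pq p q \<Longrightarrow> y' @ z \<in> L_pq p q \<Longrightarrow>
    nval p q y mod q ^ length z = nval p q y' mod q ^ length z"
proof (induct z arbitrary: y y')
  case (Cons b z)
  have yb: "y @ [b] \<in> L_pq p q" "y' @ [b] \<in> L_pq p q"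
    using L_pq_appendD[of "y @ [b]" z] L_pq_appendD[of "y' @ [b]" z] Cons.prems by auto
  have "nval p q (y @ [b]) mod q ^ length z = nval p q (y' @ [b]) mod q ^ length z"
    using Cons.hyps[of "y @ [b]" "y' @ [b]"] Cons.prems by simp
  then have "[q * nval p q (y @ [b]) = q * nval p q (y' @ [b])] (mod q ^ Suc (length z))"
    by (simp add: cong_def mod_mult_mult1)
  then have "[p * nval p q y + b = p * nval p q y' + b] (mod q ^ Suc (length z))"
    by (simp only: L_pq_snocD(3)[OF yb(1)] L_pq_snocD(3)[OF yb(2)])
  then have "[p * nval p q y = p * nval p q y'] (mod q ^ Suc (length z))"
    by (simp add: cong_add_rcancel_nat)
  then have "[nval p q y = nval p q y'] (mod q ^ Suc (length z))"
    using coprime_pq by (simp add: cong_mult_lcancel_nat)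
  then show ?case by (simp add: cong_def)
qed simp

end

section \<open>Automata from right congruences\<close>

lemma pq_automatic_if_nat_right_congruence:
  fixes S :: "nat list \<Rightarrow> nat" and L :: "nat list set"
  assumes rep_mem: "\<And>n. rep_pq p q n \<in> L"
    and snoc_closed: "\<And>w a. w @ [a] \<in> L \<Longrightarrow> w \<in> L"
    and finite_states: "finite (S ` L)"
    and congruence: "\<And>w w' a. w @ [a] \<in> L \<Longrightarrow> w' @ [a] \<in> L \<Longrightarrow> S w = S w' \<Longrightarrow>
      S (w @ [a]) = S (w' @ [a])"
    and decoration: "\<And>n n'. S (rep_pq p q n) = S (rep_pq p q n') \<Longrightarrow> x n = x n'"
  shows "pq_automatic p q x"
proof -
  text \<open>A transition is read off any representative; letters leading out of L are never read,
    and there the state is simply kept.\<close>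
  define pred where "pred s a = (SOME w. w @ [a] \<in> L \<and> S w = s)" for s a
  define \<delta> where "\<delta> s a = (if \<exists>w. w @ [a] \<in> L \<and> S w = s then S (pred s a @ [a]) else s)" for s a
  define \<tau> where "\<tau> s = x (SOME n. S (rep_pq p q n) = s)" for s
  have pred: "pred s a @ [a] \<in> L \<and> S (pred s a) = s" if "\<exists>w. w @ [a] \<in> L \<and> S w = s" for s a
    using someI_ex[OF that] unfolding pred_def .
  have "[] \<in> L" if "w \<in> L" for w
    using that by (induct w rule: rev_induct) (use snoc_closed in blast)+
  with rep_mem have "[] \<in> L" by blast
  have \<delta>_closed: "\<delta> s a \<in> S ` L" if "s \<in> S ` L" for s a
    using that pred[where s = s and a = a] unfolding \<delta>_def by (simp split: if_split)
  have run: "foldl \<delta> (S []) w = S w" if "w \<in> L" for w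
    using that
  proof (induct w rule: rev_induct)
    case (snoc a w)
    have ex: "\<exists>v. v @ [a] \<in> L \<and> S v = S w" using snoc.prems by blast
    then have "S (pred (S w) a @ [a]) = S (w @ [a])" using pred[OF ex] congruence snoc.prems by blast
    then show ?case using snoc.hyps[OF snoc_closed[OF snoc.prems]] ex by (simp add: \<delta>_def)
  qed simp
  have "\<tau> (S (rep_pq p q n)) = x n" for n
    unfolding \<tau>_def
    by (rule someI2[of "\<lambda>n'. S (rep_pq p q n') = S (rep_pq p q n)"]) (rule refl, erule decoration)
  then have "x n = \<tau> (foldl \<delta> (S []) (rep_pq p q n))" for n
    using run[OF rep_mem] by simp
  then show ?thesis
    unfolding pq_automatic_def using finite_states \<open>[] \<in> L\<close> \<delta>_closed
    by (intro exI[of _ "S ` L"] exI[of _ "S []"] exI[of _ \<delta>] exI[of _ \<tau>]) blast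
qed

lemma pq_automatic_if_right_congruence:
  fixes S :: "nat list \<Rightarrow> 's" and L :: "nat list set"
  assumes rep_mem: "\<And>n. rep_pq p q n \<in> L"
    and snoc_closed: "\<And>w a. w @ [a] \<in> L \<Longrightarrow> w \<in> L"
    and finite_states: "finite (S ` L)"
    and congruence: "\<And>w w' a. w @ [a] \<in> L \<Longrightarrow> w' @ [a] \<in> L \<Longrightarrow> S w = S w' \<Longrightarrow>
      S (w @ [a]) = S (w' @ [a])"
    and decoration: "\<And>n n'. S (rep_pq p q n) = S (rep_pq p q n') \<Longrightarrow> x n = x n'"
  shows "pq_automatic p q x"
proof -
  obtain f :: "'s \<Rightarrow> nat" where f: "inj_on f (S ` L)"
    using finite_imp_inj_to_nat_seg[OF finite_states] by blast
  have S_eq: "S w = S w'" if "w \<in> L" "w' \<in> L" "f (S w) = f (S w')" for w w'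
    using f that by (auto dest: inj_onD)
  show ?thesis
  proof (rule pq_automatic_if_nat_right_congruence[where S = "f \<circ> S"])
    show "finite ((f \<circ> S) ` L)" using finite_imageI[OF finite_states, of f] by (simp add: image_comp)
    show "(f \<circ> S) (w @ [a]) = (f \<circ> S) (w' @ [a])"
      if "w @ [a] \<in> L" "w' @ [a] \<in> L" "(f \<circ> S) w = (f \<circ> S) w'" for w w' a
      using that congruence S_eq[OF snoc_closed snoc_closed] by (metis comp_apply)
    show "x n = x n'" if "(f \<circ> S) (rep_pq p q n) = (f \<circ> S) (rep_pq p q n')" for n n'
      using that decoration S_eq[OF rep_mem rep_mem] by (metis comp_apply)
  qed (use rep_mem snoc_closed in blast)+
qed

section \<open>Recurrent factors\<close>

lemma extends_factor: "extends h (factor p q x w h) (factor p q x w (Suc h))"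
  unfolding extends_def factor_def by auto

lemma factor_snoc: "factor p q x (u @ [b]) h = (\<lambda>t. factor p q x u (Suc h) (b # t))"
  unfolding factor_def by auto

definition unique_recurrent_extensions :: "nat \<Rightarrow> nat \<Rightarrow> (nat \<Rightarrow> 'b) \<Rightarrow> nat \<Rightarrow> bool" where
  "unique_recurrent_extensions p q x h \<longleftrightarrow> (\<forall>U \<in> F_inf p q x h. \<forall>j < q. \<forall>U1 U2.
     U1 \<in> F_inf_a p q x (Suc h) (wj0 p q j) \<and> U2 \<in> F_inf_a p q x (Suc h) (wj0 p q j) \<and>
     extends h U U1 \<and> extends h U U2 \<longrightarrow> U1 = U2)"

locale decorated_tree = pq_numeration +
  fixes x :: "nat \<Rightarrow> 'b" and B :: "'b set"
  assumes finite_B: "finite B" and x_in_B: "x n \<in> B"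
begin

lemma finite_range_factor: "finite (range (\<lambda>w. factor p q x w k))"
proof -
  let ?W = "{u. set u \<subseteq> alph p \<and> length u \<le> k}"
  let ?F = "{f. \<forall>u. (u \<in> ?W \<longrightarrow> f u \<in> insert None (Some ` B)) \<and> (u \<notin> ?W \<longrightarrow> f u = None)}"
  have "finite ?W" by (rule finite_lists_length_le) (simp add: alph_def)
  then have "finite ?F" using finite_B by (intro finite_set_of_finite_funs) auto
  moreover have "range (\<lambda>w. factor p q x w k) \<subseteq> ?F"
    using L_pq_subset_lists x_in_B by (auto simp: factor_def in_lists_conv_set split: if_splits)
  ultimately show ?thesis by (rule finite_subset[rotated])
qed

lemma eventually_factor_mem_F_inf:
  "\<exists>M. \<forall>y \<in> L_pq p q. M < length y \<longrightarrow> factor p q x y k \<in> F_inf p q x k"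
proof -
  have "{y \<in> L_pq p q. factor p q x y k \<notin> F_inf p q x k} \<subseteq>
      (\<Union>U \<in> range (\<lambda>w. factor p q x w k) - F_inf p q x k. {w \<in> L_pq p q. factor p q x w k = U})"
    by auto
  moreover have "finite \<dots>"
    using finite_range_factor by (intro finite_UN_I) (auto simp: F_inf_def)
  ultimately have "finite (length ` {y \<in> L_pq p q. factor p q x y k \<notin> F_inf p q x k})"
    by (meson finite_imageI finite_subset)
  then obtain M where "\<forall>n \<in> length ` {y \<in> L_pq p q. factor p q x y k \<notin> F_inf p q x k}. n \<le> M"
    using finite_nat_set_iff_bounded_le by blast
  then show ?thesis by (auto intro!: exI[of _ M])
qed

lemma factor_mem_F_inf_a:
  assumes "y \<in> L_pq p q" "y \<noteq> []" "factor p q x y (Suc k) \<in> F_inf p q x (Suc k)"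
  shows "factor p q x y (Suc k) \<in> F_inf_a p q x (Suc k) (last (least_ext p q (nval p q y) (Suc k)))"
proof -
  let ?l = "least_ext p q (nval p q y) (Suc k)"
  have "factor p q x y (Suc k) ?l \<noteq> None"
    using append_least_ext_mem_L_pq[OF assms(1,2)] by (simp add: factor_def del: least_ext.simps)
  moreover have "radix_le ?l v" if "factor p q x y (Suc k) v \<noteq> None" "length v = Suc k" for v
    using that least_ext_lexord_le[OF assms(1,2), of v "Suc k"]
    by (auto simp: factor_def radix_le_def split: if_splits)
  moreover have "?l \<noteq> []" by (metis length_least_ext nat.distinct(1) list.size(3))
  ultimately show ?thesis
    unfolding F_inf_a_def using assms(3) by (intro CollectI conjI exI[of _ ?l]) auto
qed

lemma factor_Suc_eq_if_common_extension:
  assumes unique: "unique_recurrent_extensions p q x h"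
    and y: "y \<in> L_pq p q" "y \<noteq> []" and y': "y' \<in> L_pq p q" "y' \<noteq> []"
    and recurrent: "factor p q x y h \<in> F_inf p q x h"
      "factor p q x y (Suc h) \<in> F_inf p q x (Suc h)" "factor p q x y' (Suc h) \<in> F_inf p q x (Suc h)"
    and z: "y @ z \<in> L_pq p q" "y' @ z \<in> L_pq p q" "length z = Suc h"
    and eq: "factor p q x y h = factor p q x y' h"
  shows "factor p q x y (Suc h) = factor p q x y' (Suc h)"
proof -
  have "least_ext p q (nval p q y) (Suc h) = least_ext p q (nval p q y') (Suc h)"
    using nval_mod_eq_if_common_extension[OF z(1,2)] z(3) by (intro least_ext_cong) simp
  moreover obtain j where "j < q" "last (least_ext p q (nval p q y) (Suc h)) = wj0 p q j"
    using last_least_ext by blast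
  ultimately have "factor p q x y (Suc h) \<in> F_inf_a p q x (Suc h) (wj0 p q j)"
    "factor p q x y' (Suc h) \<in> F_inf_a p q x (Suc h) (wj0 p q j)"
    using factor_mem_F_inf_a[OF y recurrent(2)] factor_mem_F_inf_a[OF y' recurrent(3)]
    by (simp_all del: least_ext.simps)
  moreover have "extends h (factor p q x y h) (factor p q x y' (Suc h))"
    using extends_factor eq by metis
  ultimately show ?thesis
    using unique recurrent(1) \<open>j < q\<close> extends_factor unfolding unique_recurrent_extensions_def by blast
qed

end

definition factor_state ::
    "nat \<Rightarrow> nat \<Rightarrow> (nat \<Rightarrow> 'b) \<Rightarrow> nat \<Rightarrow> nat \<Rightarrow> nat list \<Rightarrow> nat list + (nat list \<Rightarrow> 'b option) \<times> nat list"
  where "factor_state p q x K M w = (if length w \<le> M then Inl w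
     else Inr (factor p q x (take (length w - K) w) K, drop (length w - K) w))"

lemma factor_state_append:
  "length v = K \<Longrightarrow> M < length (u @ v) \<Longrightarrow> factor_state p q x K M (u @ v) = Inr (factor p q x u K, v)"
  by (simp add: factor_state_def)

lemma factor_state_eqE:
  assumes "factor_state p q x K M w = factor_state p q x K M w'" "K \<le> M"
  obtains "w = w'"
  | u u' v where "w = u @ v" "w' = u' @ v" "length v = K" "M < length w" "M < length w'"
      "factor p q x u K = factor p q x u' K"
proof (cases "length w \<le> M \<or> length w' \<le> M")
  case True
  with assms(1) have "w = w'" by (auto simp: factor_state_def split: if_splits)
  then show ?thesis by (rule that(1))
next
  case False
  let ?u = "take (length w - K) w" and ?u' = "take (length w' - K) w'" and ?v = "drop (length w - K) w"
  from assms(1) False have "factor p q x ?u K = factor p q x ?u' K" "drop (length w' - K) w' = ?v"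
    by (simp_all add: factor_state_def)
  then have "w' = ?u' @ ?v" by (metis append_take_drop_id)
  with False assms(2) \<open>factor p q x ?u K = factor p q x ?u' K\<close> show ?thesis
    by (intro that(2)[of ?u ?v ?u']) simp_all
qed

context decorated_tree
begin

lemma finite_factor_state_image: "finite (factor_state p q x K M ` L_pq p q)"
proof -
  let ?short = "{w. set w \<subseteq> alph p \<and> length w \<le> M}"
  let ?suffixes = "{v. set v \<subseteq> alph p \<and> length v \<le> K}"
  have "factor_state p q x K M w \<in> Inl ` ?short \<union> Inr ` (range (\<lambda>w. factor p q x w K) \<times> ?suffixes)"
    if "w \<in> L_pq p q" for w
  proof -
    have "set w \<subseteq> alph p" using that L_pq_subset_lists by (auto simp: in_lists_conv_set)
    then have "set (drop (length w - K) w) \<subseteq> alph p" by (meson order_trans set_drop_subset)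
    with \<open>set w \<subseteq> alph p\<close> show ?thesis by (simp add: factor_state_def)
  qed
  moreover have "finite ?short" "finite ?suffixes"
    by (rule finite_lists_length_le, simp add: alph_def)+
  ultimately show ?thesis
    using finite_range_factor by (meson finite_SigmaI finite_UnI finite_imageI finite_subset image_subsetI)
qed

text \<open>For w = u b z and w' = u' b z, the factors at u b and u' b agree at height h, are recurrent
  since u b and u' b are longer than M, and have the common extension z a.\<close>
lemma factor_state_snoc_cong:
  assumes unique: "unique_recurrent_extensions p q x h"
    and recurrent: "\<And>y. y \<in> L_pq p q \<Longrightarrow> M < length y \<Longrightarrow>
      factor p q x y h \<in> F_inf p q x h \<and> factor p q x y (Suc h) \<in> F_inf p q x (Suc h)"
    and wa: "w @ [a] \<in> L_pq p q" and wa': "w' @ [a] \<in> L_pq p q"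
    and eq: "factor_state p q x (Suc h) (M + Suc h) w = factor_state p q x (Suc h) (M + Suc h) w'"
  shows "factor_state p q x (Suc h) (M + Suc h) (w @ [a]) =
    factor_state p q x (Suc h) (M + Suc h) (w' @ [a])"
proof (rule factor_state_eqE[OF eq])
  fix u u' v
  assume w: "w = u @ v" and w': "w' = u' @ v" and v: "length v = Suc h"
    and long: "M + Suc h < length w" "M + Suc h < length w'"
    and factor_eq: "factor p q x u (Suc h) = factor p q x u' (Suc h)"
  obtain b z where bz: "v = b # z" using v by (cases v) auto
  have ext: "(u @ [b]) @ (z @ [a]) \<in> L_pq p q" "(u' @ [b]) @ (z @ [a]) \<in> L_pq p q"
    using wa wa' w w' bz by auto
  then have ub: "u @ [b] \<in> L_pq p q" "u' @ [b] \<in> L_pq p q" by (meson L_pq_appendD)+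
  have "M < length (u @ [b])" "M < length (u' @ [b])" using long w w' v bz by auto
  then have "factor p q x (u @ [b]) (Suc h) = factor p q x (u' @ [b]) (Suc h)"
    using factor_Suc_eq_if_common_extension[OF unique ub(1) _ ub(2) _ _ _ _ ext] recurrent[OF ub(1)]
      recurrent[OF ub(2)] factor_eq v bz by (simp add: factor_snoc)
  moreover have "factor_state p q x (Suc h) (M + Suc h) (w @ [a]) =
      Inr (factor p q x (u @ [b]) (Suc h), z @ [a])"
    using factor_state_append[of "z @ [a]" "Suc h" "M + Suc h" "u @ [b]" p q x] long(1) w v bz by simp
  moreover have "factor_state p q x (Suc h) (M + Suc h) (w' @ [a]) =
      Inr (factor p q x (u' @ [b]) (Suc h), z @ [a])"
    using factor_state_append[of "z @ [a]" "Suc h" "M + Suc h" "u' @ [b]" p q x] long(2) w' v bz by simp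
  ultimately show ?thesis by simp
qed simp_all

lemma factor_state_decoration:
  assumes "w \<in> L_pq p q" "w' \<in> L_pq p q" "K \<le> M"
    and "factor_state p q x K M w = factor_state p q x K M w'"
  shows "x (nval p q w) = x (nval p q w')"
proof (rule factor_state_eqE[OF assms(4,3)])
  fix u u' v
  assume split: "w = u @ v" "w' = u' @ v" "length v = K"
    and factor_eq: "factor p q x u K = factor p q x u' K"
  from split have "factor p q x u K v = Some (x (nval p q w))" "factor p q x u' K v = Some (x (nval p q w'))"
    using assms(1,2) by (simp_all add: factor_def nval_def)
  with factor_eq show ?thesis by simp
qed simp

end

theorem mainTheorem12:
  fixes p q :: nat and x :: "nat \<Rightarrow> 'b" and B :: "'b set"
  assumes "q > 1" and "p > q" and "coprime p q"
    and "finite B" and "\<forall>n. x n \<in> B"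
    and "\<exists>h. \<forall>U \<in> F_inf p q x h. \<forall>j < q. \<forall>U1 U2.
            U1 \<in> F_inf_a p q x (Suc h) (wj0 p q j) \<and> U2 \<in> F_inf_a p q x (Suc h) (wj0 p q j) \<and>
            extends h U U1 \<and> extends h U U2 \<longrightarrow> U1 = U2"
  shows "pq_automatic p q x"
proof -
  interpret decorated_tree p q x B
    using assms(1-5) by unfold_locales auto
  obtain h where unique: "unique_recurrent_extensions p q x h"
    using assms(6) unfolding unique_recurrent_extensions_def by blast
  obtain M1 M2 where
    "\<forall>y \<in> L_pq p q. M1 < length y \<longrightarrow> factor p q x y h \<in> F_inf p q x h"
    "\<forall>y \<in> L_pq p q. M2 < length y \<longrightarrow> factor p q x y (Suc h) \<in> F_inf p q x (Suc h)"
    using eventually_factor_mem_F_inf by metis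
  then have recurrent: "\<And>y. y \<in> L_pq p q \<Longrightarrow> M1 + M2 < length y \<Longrightarrow>
      factor p q x y h \<in> F_inf p q x h \<and> factor p q x y (Suc h) \<in> F_inf p q x (Suc h)"
    by auto
  let ?S = "factor_state p q x (Suc h) (M1 + M2 + Suc h)"
  show ?thesis
  proof (rule pq_automatic_if_right_congruence[where S = ?S and L = "L_pq p q"])
    show "x n = x n'" if "?S (rep_pq p q n) = ?S (rep_pq p q n')" for n n'
      using factor_state_decoration[OF rep_pq_mem_L_pq rep_pq_mem_L_pq _ that] by simp
    show "?S (w @ [a]) = ?S (w' @ [a])"
      if "w @ [a] \<in> L_pq p q" "w' @ [a] \<in> L_pq p q" "?S w = ?S w'" for w w' a
      using factor_state_snoc_cong[OF unique recurrent that] by (simp add: add.assoc)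
  qed (fact rep_pq_mem_L_pq L_pq_snocD(1) finite_factor_state_image)+
qed

end
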